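(* Let $(H,\Lambda,\lambda)$ be an integral Hopf algebra in a strict symmetric monoidal category $\mathcal{C}$, with multiplication $\mu$, comultiplication $\Delta$ and antipode $s$. Define $\beta:=\lambda\circ\mu\colon H\otimes H\to I$ and $\gamma:=(s\otimes\mathrm{id}_H)\circ\Delta\circ\Lambda\colon I\to H\otimes H$. Then $H$ is nondegenerate, i.e. both $(\mathrm{id}_H\otimes\beta)\circ(\gamma\otimes\mathrm{id}_H)=\mathrm{id}_H$ and $(\beta\otimes\mathrm{id}_H)\circ(\mathrm{id}_H\otimes\gamma)=\mathrm{id}_H$ hold, if and only if $\lambda\circ s\circ\Lambda=\mathrm{id}_I$.
   Context: $\mathcal{C}$ is a strict symmetric monoidal category with unit object $I$ and symmetry $\sigma$. A Hopf algebra $(H,\mu,\eta,\Delta,\varepsilon,s)$ in $\mathcal{C}$ consists of an object $H$, an associative unital monoid $\mu\colon H\otimes H\to H$, $\eta\colon I\to H$, a coassociative counital comonoid $\Delta\colon H\to H\otimes H$, $\varepsilon\colon H\to I$, satisfying $\Delta\circ\mu=(\mu\otimes\mu)\circ(\mathrm{id}_H\otimes\sigma_{H,H}\otimes\mathrm{id}_H)\circ(\Delta\otimes\Delta)$, $\Delta\circ\eta=\eta\otimes\eta$, $\varepsilon\circ\mu=\varepsilon\otimes\varepsilon$, $\varepsilon\circ\eta=\mathrm{id}_I$, and an antipode $s\colon H\to H$ with $\mu\circ(s\otimes\mathrm{id}_H)\circ\Delta=\eta\circ\varepsilon=\mu\circ(\mathrm{id}_H\otimes s)\circ\Delta$. A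 left cointegral is a point $\Lambda\colon I\to H$ with $\mu\circ(\Lambda\otimes\mathrm{id}_H)=\Lambda\circ\varepsilon$; a right integral is a copoint $\lambda\colon H\to I$ with $(\mathrm{id}_H\otimes\lambda)\circ\Delta=\eta\circ\lambda$. An integral Hopf algebra $(H,\Lambda,\lambda)$ is a Hopf algebra with a chosen left cointegral $\Lambda$ and right integral $\lambda$ such that $\lambda\circ\Lambda=\mathrm{id}_I$. *)

theory Defs
  imports Main
begin

text \<open>Composition sm_comp g f (= g after f)
is meaningful when the codomain of f is the domain of g.\<close>

record ('o, 'm) smc =
  sm_dom   :: "'m \<Rightarrow> 'o"
  sm_cod   :: "'m \<Rightarrow> 'o"
  sm_comp  :: "'m \<Rightarrow> 'm \<Rightarrow> 'm"
  sm_id    :: "'o \<Rightarrow> 'm"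
  sm_otens :: "'o \<Rightarrow> 'o \<Rightarrow> 'o"
  sm_tens  :: "'m \<Rightarrow> 'm \<Rightarrow> 'm"
  sm_unit  :: "'o"
  sm_sym   :: "'o \<Rightarrow> 'o \<Rightarrow> 'm"

definition strict_symmetric_monoidal_category :: "('o, 'm) smc \<Rightarrow> bool" where
  "strict_symmetric_monoidal_category C \<longleftrightarrow>
     \<comment> \<open>category axioms\<close>
     (\<forall>f g. sm_cod C f = sm_dom C g \<longrightarrow>
         sm_dom C (sm_comp C g f) = sm_dom C f \<and> sm_cod C (sm_comp C g f) = sm_cod C g) \<and>
     (\<forall>f g h. sm_cod C f = sm_dom C g \<and> sm_cod C g = sm_dom C h \<longrightarrow>
         sm_comp C h (sm_comp C g f) = sm_comp C (sm_comp C h g) f) \<and>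
     (\<forall>a. sm_dom C (sm_id C a) = a \<and> sm_cod C (sm_id C a) = a) \<and>
     (\<forall>f. sm_comp C f (sm_id C (sm_dom C f)) = f \<and> sm_comp C (sm_id C (sm_cod C f)) f = f) \<and>
     \<comment> \<open>tensor is a bifunctor\<close>
     (\<forall>f g. sm_dom C (sm_tens C f g) = sm_otens C (sm_dom C f) (sm_dom C g) \<and>
            sm_cod C (sm_tens C f g) = sm_otens C (sm_cod C f) (sm_cod C g)) \<and>
     (\<forall>a b. sm_tens C (sm_id C a) (sm_id C b) = sm_id C (sm_otens C a b)) \<and>
     (\<forall>f g f' g'. sm_cod C f = sm_dom C g \<and> sm_cod C f' = sm_dom C g' \<longrightarrow>
         sm_tens C (sm_comp C g f) (sm_comp C g' f') =
         sm_comp C (sm_tens C g g') (sm_tens C f f')) \<and>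
     \<comment> \<open>strictness\<close>
     (\<forall>a b c. sm_otens C (sm_otens C a b) c = sm_otens C a (sm_otens C b c)) \<and>
     (\<forall>a. sm_otens C (sm_unit C) a = a \<and> sm_otens C a (sm_unit C) = a) \<and>
     (\<forall>f g h. sm_tens C (sm_tens C f g) h = sm_tens C f (sm_tens C g h)) \<and>
     (\<forall>f. sm_tens C (sm_id C (sm_unit C)) f = f \<and> sm_tens C f (sm_id C (sm_unit C)) = f) \<and>
     \<comment> \<open>symmetry: natural, involutive, hexagon\<close>
     (\<forall>a b. sm_dom C (sm_sym C a b) = sm_otens C a b \<and> sm_cod C (sm_sym C a b) = sm_otens C b a) \<and>
     (\<forall>f g. sm_comp C (sm_sym C (sm_cod C f) (sm_cod C g)) (sm_tens C f g) =
            sm_comp C (sm_tens C g f) (sm_sym C (sm_dom C f) (sm_dom C g))) \<and>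
     (\<forall>a b. sm_comp C (sm_sym C b a) (sm_sym C a b) = sm_id C (sm_otens C a b)) \<and>
     (\<forall>a b c. sm_sym C a (sm_otens C b c) =
         sm_comp C (sm_tens C (sm_id C b) (sm_sym C a c)) (sm_tens C (sm_sym C a b) (sm_id C c)))"

definition hopf_algebra ::
  "('o, 'm) smc \<Rightarrow> 'o \<Rightarrow> 'm \<Rightarrow> 'm \<Rightarrow> 'm \<Rightarrow> 'm \<Rightarrow> 'm \<Rightarrow> bool" where
  "hopf_algebra C H mu eta De ep s \<longleftrightarrow>
     (let I = sm_unit C; iH = sm_id C H; cp = sm_comp C; tn = sm_tens C; HH = sm_otens C H H in
     sm_dom C mu = HH \<and> sm_cod C mu = H \<and>
     sm_dom C eta = I \<and> sm_cod C eta = H \<and>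
     sm_dom C De = H \<and> sm_cod C De = HH \<and>
     sm_dom C ep = H \<and> sm_cod C ep = I \<and>
     sm_dom C s = H \<and> sm_cod C s = H \<and>
     cp mu (tn mu iH) = cp mu (tn iH mu) \<and>
     cp mu (tn eta iH) = iH \<and> cp mu (tn iH eta) = iH \<and>
     cp (tn De iH) De = cp (tn iH De) De \<and>
     cp (tn ep iH) De = iH \<and> cp (tn iH ep) De = iH \<and>
     cp De mu = cp (tn mu mu) (cp (tn (tn iH (sm_sym C H H)) iH) (tn De De)) \<and>
     cp De eta = tn eta eta \<and>
     cp ep mu = tn ep ep \<and>
     cp ep eta = sm_id C I \<and>
     cp mu (cp (tn s iH) De) = cp eta ep \<and>
     cp mu (cp (tn iH s) De) = cp eta ep)"

definition left_cointegral ::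
  "('o, 'm) smc \<Rightarrow> 'o \<Rightarrow> 'm \<Rightarrow> 'm \<Rightarrow> 'm \<Rightarrow> bool" where
  "left_cointegral C H mu ep Lam \<longleftrightarrow>
     sm_dom C Lam = sm_unit C \<and> sm_cod C Lam = H \<and>
     sm_comp C mu (sm_tens C Lam (sm_id C H)) = sm_comp C Lam ep"

definition right_integral ::
  "('o, 'm) smc \<Rightarrow> 'o \<Rightarrow> 'm \<Rightarrow> 'm \<Rightarrow> 'm \<Rightarrow> bool" where
  "right_integral C H eta De lam \<longleftrightarrow>
     sm_dom C lam = H \<and> sm_cod C lam = sm_unit C \<and>
     sm_comp C (sm_tens C (sm_id C H) lam) De = sm_comp C eta lam"

definition integral_hopf_algebra ::
  "('o, 'm) smc \<Rightarrow> 'o \<Rightarrow> 'm \<Rightarrow> 'm \<Rightarrow> 'm \<Rightarrow> 'm \<Rightarrow> 'm \<Rightarrow> 'm \<Rightarrow> 'm \<Rightarrow> bool" where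
  "integral_hopf_algebra C H mu eta De ep s Lam lam \<longleftrightarrow>
     hopf_algebra C H mu eta De ep s \<and>
     left_cointegral C H mu ep Lam \<and> right_integral C H eta De lam \<and>
     sm_comp C lam Lam = sm_id C (sm_unit C)"

end

theory Submission
  imports Defs
begin

text \<open>In Sweedler notation \<open>\<beta>(x \<otimes> y) = \<lambda>(x y)\<close> and \<open>\<gamma> = S(\<Lambda>\<^sub>1) \<otimes> \<Lambda>\<^sub>2\<close>.
  The first zigzag identity \<open>S(\<Lambda>\<^sub>1) \<lambda>(\<Lambda>\<^sub>2 h) = h\<close> holds in every integral Hopf algebra.
  For the second one, the cointegral property and the fact that \<open>S\<close> reverses products give
  \<open>\<lambda>(h S(\<Lambda>\<^sub>1)) \<Lambda>\<^sub>2 = g h\<close> with \<open>g = \<lambda>(S(\<Lambda>\<^sub>1)) \<Lambda>\<^sub>2\<close>, and since \<open>S\<close> also reverses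
  coproducts, the integral property gives \<open>g = \<lambda>(S(\<Lambda>)) 1\<close>. So the second zigzag is
  multiplication by the scalar \<open>\<lambda>(S(\<Lambda>))\<close>. That \<open>S\<close> reverses coproducts is the convolution
  argument: \<open>\<Delta> \<circ> S\<close> and \<open>\<sigma> \<circ> (S \<otimes> S) \<circ> \<Delta>\<close> are both convolution inverses of \<open>\<Delta>\<close> in
  \<open>Hom(H, H \<otimes> H)\<close>; read in the opposite category, the same statement says that \<open>S\<close> reverses
  products.\<close>

section \<open>Words of morphisms\<close>

text \<open>Composites of structure maps are handled as words: \<open>composite C [f\<^sub>1, \<dots>, f\<^sub>n]\<close> is
  \<open>f\<^sub>1 \<circ> \<dots> \<circ> f\<^sub>n\<close>, so the head is applied last. String-diagram reasoning becomes rewriting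
  of subwords.\<close>

fun composable :: "('o, 'm) smc \<Rightarrow> 'm list \<Rightarrow> bool" where
  "composable C [] = True"
| "composable C [f] = True"
| "composable C (f # g # fs) = (sm_cod C g = sm_dom C f \<and> composable C (g # fs))"

fun composite :: "('o, 'm) smc \<Rightarrow> 'm list \<Rightarrow> 'm" where
  "composite C [] = sm_id C (sm_unit C)"
| "composite C [f] = f"
| "composite C (f # g # fs) = sm_comp C f (composite C (g # fs))"

declare composite.simps(3)[simp del]

locale strict_smc =
  fixes C :: "('o, 'm) smc"
  assumes smc: "strict_symmetric_monoidal_category C"
begin

abbreviation "dm \<equiv> sm_dom C"
abbreviation "cd \<equiv> sm_cod C"
abbreviation "cp \<equiv> sm_comp C"
abbreviation "idm \<equiv> sm_id C"
abbreviation "ot \<equiv> sm_otens C"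
abbreviation "tn \<equiv> sm_tens C"
abbreviation "un \<equiv> sm_unit C"
abbreviation "sy \<equiv> sm_sym C"
abbreviation "cmp \<equiv> composite C"

lemmas smc_axioms = smc[unfolded strict_symmetric_monoidal_category_def]

lemma dm_cp [simp]: "cd f = dm g \<Longrightarrow> dm (cp g f) = dm f"
  and cd_cp [simp]: "cd f = dm g \<Longrightarrow> cd (cp g f) = cd g"
  using smc_axioms by auto

lemma cp_assoc: "cd f = dm g \<Longrightarrow> cd g = dm h \<Longrightarrow> cp h (cp g f) = cp (cp h g) f"
  using smc_axioms by auto

lemma dm_idm [simp]: "dm (idm a) = a" and cd_idm [simp]: "cd (idm a) = a"
  using smc_axioms by auto

lemma cp_idm_right: "dm f = a \<Longrightarrow> cp f (idm a) = f"
  and cp_idm_left: "cd f = a \<Longrightarrow> cp (idm a) f = f"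
  using smc_axioms by auto

lemma dm_tn [simp]: "dm (tn f g) = ot (dm f) (dm g)" and cd_tn [simp]: "cd (tn f g) = ot (cd f) (cd g)"
  using smc_axioms by auto

lemma tn_idm: "tn (idm a) (idm b) = idm (ot a b)"
  using smc_axioms by auto

lemma interchange:
  "cd f = dm g \<Longrightarrow> cd f' = dm g' \<Longrightarrow> tn (cp g f) (cp g' f') = cp (tn g g') (tn f f')"
  using smc_axioms by auto

lemma ot_assoc [simp]: "ot (ot a b) c = ot a (ot b c)"
  and ot_unit [simp]: "ot un a = a" "ot a un = a"
  and tn_assoc [simp]: "tn (tn f g) h = tn f (tn g h)"
  and tn_unit [simp]: "tn (idm un) f = f" "tn f (idm un) = f"
  using smc_axioms by auto

lemma dm_sy: "dm (sy a b) = ot a b" and cd_sy: "cd (sy a b) = ot b a"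
  using smc_axioms by auto

lemma sy_natural: "cp (sy (cd f) (cd g)) (tn f g) = cp (tn g f) (sy (dm f) (dm g))"
  and sy_inverse: "cp (sy b a) (sy a b) = idm (ot a b)"
  and hexagon: "sy a (ot b c) = cp (tn (idm b) (sy a c)) (tn (sy a b) (idm c))"
  using smc_axioms by auto

lemma cp_idm_idm: "cp (idm a) (idm a) = idm a"
  by (simp add: cp_idm_left)

text \<open>The symmetry on the unit is idempotent by the hexagon and invertible, hence trivial.\<close>

lemma sy_unit: "sy a un = idm a" "sy un a = idm a"
proof -
  have idem: "cp (sy a un) (sy a un) = sy a un"
    using hexagon[of a un un] by simp
  have inv: "cp (sy un a) (sy a un) = idm a"
    using sy_inverse[of un a] by simp
  have "sy a un = cp (cp (sy un a) (sy a un)) (sy a un)"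
    using inv cp_idm_left[of "sy a un" a] by (simp add: cd_sy)
  also have "\<dots> = cp (sy un a) (cp (sy a un) (sy a un))"
    by (rule cp_assoc[symmetric]) (simp_all add: dm_sy cd_sy)
  also have "\<dots> = idm a"
    using idem inv by simp
  finally show right: "sy a un = idm a" .
  have "cp (sy a un) (sy un a) = idm a"
    using sy_inverse[of a un] by simp
  then show "sy un a = idm a"
    using right cp_idm_left[of "sy un a" a] by (simp add: cd_sy)
qed

lemma hexagon':
  "sy (ot b c) a = cp (tn (sy b a) (idm c)) (tn (idm b) (sy c a))" (is "?Z = ?Y")
proof -
  let ?V = "sy a (ot b c)"
  have Y_dm_cd: "dm ?Y = ot b (ot c a)" "cd ?Y = ot a (ot b c)"
    by (simp_all add: dm_sy cd_sy)
  have "cp ?Y ?V = cp (tn (sy b a) (idm c))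
      (cp (cp (tn (idm b) (sy c a)) (tn (idm b) (sy a c))) (tn (sy a b) (idm c)))"
    unfolding hexagon[of a b c] by (simp add: cp_assoc dm_sy cd_sy)
  also have "cp (tn (idm b) (sy c a)) (tn (idm b) (sy a c)) = idm (ot b (ot a c))"
    by (simp add: interchange[symmetric] dm_sy cd_sy cp_idm_idm sy_inverse tn_idm)
  also have "cp (tn (sy b a) (idm c)) (cp (idm (ot b (ot a c))) (tn (sy a b) (idm c)))
      = idm (ot a (ot b c))"
    by (simp add: cp_idm_left interchange[symmetric] dm_sy cd_sy cp_idm_idm sy_inverse tn_idm)
  finally have YV: "cp ?Y ?V = idm (ot a (ot b c))" .
  have "?Z = cp (cp ?Y ?V) ?Z"
    using YV cp_idm_left[of ?Z] by (simp add: cd_sy)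
  also have "\<dots> = cp ?Y (cp ?V ?Z)"
    by (rule cp_assoc[symmetric]) (simp_all add: dm_sy cd_sy)
  also have "\<dots> = ?Y"
    using sy_inverse[of a "ot b c"] cp_idm_right[of ?Y] Y_dm_cd by simp
  finally show ?thesis .
qed

lemma composite_Cons_dm_cd:
  "composable C (f # fs) \<Longrightarrow> dm (cmp (f # fs)) = dm (last (f # fs)) \<and> cd (cmp (f # fs)) = cd f"
  by (induction fs arbitrary: f) (auto simp: composite.simps(3))

lemma composite_dm_cd:
  "composable C fs \<Longrightarrow> fs \<noteq> [] \<Longrightarrow> dm (cmp fs) = dm (last fs) \<and> cd (cmp fs) = cd (hd fs)"
  using composite_Cons_dm_cd by (cases fs) auto

lemma dm_composite [simp]: "composable C (f # fs) \<Longrightarrow> dm (cmp (f # fs)) = dm (last (f # fs))"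
  and cd_composite [simp]: "composable C (f # fs) \<Longrightarrow> cd (cmp (f # fs)) = cd f"
  using composite_Cons_dm_cd by simp_all

lemma composable_append:
  "composable C (fs @ gs) \<longleftrightarrow>
     composable C fs \<and> composable C gs \<and> (fs \<noteq> [] \<longrightarrow> gs \<noteq> [] \<longrightarrow> cd (hd gs) = dm (last fs))"
proof (induction fs)
  case (Cons f fs)
  then show ?case by (cases fs; cases gs) auto
qed simp

lemma composite_append:
  "fs \<noteq> [] \<Longrightarrow> gs \<noteq> [] \<Longrightarrow> composable C (fs @ gs) \<Longrightarrow> cmp (fs @ gs) = cp (cmp fs) (cmp gs)"
proof (induction fs)
  case (Cons f fs)
  show ?case
  proof (cases fs)
    case Nil
    with Cons.prems show ?thesis by (cases gs) (auto simp: composite.simps(3))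
  next
    case (Cons g fs')
    with Cons.prems have "composable C fs" "composable C gs" "cd (hd gs) = dm (last fs)"
      and "cd g = dm f" and "composable C (fs @ gs)"
      using composable_append[of fs gs] by auto
    with Cons Cons.IH Cons.prems show ?thesis
      using composite_dm_cd[of fs] composite_dm_cd[of gs]
      by (simp add: composite.simps(3) cp_assoc)
  qed
qed simp

lemma composite_replace:
  assumes eq: "cmp fs = cmp gs" and ne: "fs \<noteq> []" "gs \<noteq> []" and "composable C gs"
    and "composable C (ps @ fs @ qs)"
  shows "cmp (ps @ fs @ qs) = cmp (ps @ gs @ qs) \<and> composable C (ps @ gs @ qs)"
proof -
  have "composable C ps" "composable C fs" "composable C qs"
    and "ps \<noteq> [] \<longrightarrow> cd (hd fs) = dm (last ps)" "qs \<noteq> [] \<longrightarrow> cd (hd qs) = dm (last fs)"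
    using assms composable_append[of ps "fs @ qs"] composable_append[of fs qs] by auto
  moreover have "dm (last fs) = dm (last gs)" "cd (hd fs) = cd (hd gs)"
    using composite_dm_cd[of fs] composite_dm_cd[of gs] assms \<open>composable C fs\<close> by auto
  ultimately have gs_qs: "composable C (gs @ qs)" and ps_gs_qs: "composable C (ps @ gs @ qs)"
    using assms composable_append[of ps "gs @ qs"] composable_append[of gs qs] by auto
  have "composable C (fs @ qs)"
    using assms composable_append[of ps "fs @ qs"] by simp
  then have "cmp (fs @ qs) = cmp (gs @ qs)"
    using eq ne gs_qs composite_append[of fs qs] composite_append[of gs qs]
    by (cases "qs = []") auto
  then have "cmp (ps @ fs @ qs) = cmp (ps @ gs @ qs)"
    using ne ps_gs_qs assms composite_append[of ps "fs @ qs"] composite_append[of ps "gs @ qs"]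
    by (cases "ps = []") auto
  with ps_gs_qs show ?thesis by simp
qed

lemma composite_drop_id:
  assumes eq: "cmp fs = idm a" and ne: "fs \<noteq> []" "ps @ qs \<noteq> []"
    and "composable C (ps @ fs @ qs)"
  shows "cmp (ps @ fs @ qs) = cmp (ps @ qs) \<and> composable C (ps @ qs)"
proof -
  have ps: "composable C ps" "ps \<noteq> [] \<longrightarrow> cd (hd fs) = dm (last ps)"
    and qs: "composable C qs" "qs \<noteq> [] \<longrightarrow> cd (hd qs) = dm (last fs)"
    and "composable C fs"
    using assms composable_append[of ps "fs @ qs"] composable_append[of fs qs] by auto
  then have a: "dm (last fs) = a" "cd (hd fs) = a"
    using composite_dm_cd[of fs] eq ne by auto
  have ps_qs: "composable C (ps @ qs)"
    using ps qs a composable_append[of ps qs] by auto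
  have replaced: "cmp (ps @ fs @ qs) = cmp (ps @ [idm a] @ qs) \<and> composable C (ps @ [idm a] @ qs)"
    using composite_replace[of fs "[idm a]" ps qs] eq ne assms by simp
  then have "composable C (idm a # qs)"
    using composable_append[of ps "[idm a] @ qs"] by simp
  have "cmp (ps @ [idm a] @ qs) = cmp (ps @ qs)"
  proof (cases "ps = []")
    case True
    then have "qs \<noteq> []" using ne by simp
    then show ?thesis
      using True qs a \<open>composable C (idm a # qs)\<close> composite_append[of "[idm a]" qs]
        composite_dm_cd[of qs]
      by (simp add: cp_idm_left)
  next
    case False
    then have "composable C (ps @ [idm a])"
      using ps a composable_append[of ps "[idm a]"] by simp
    then have "cmp (ps @ [idm a]) = cmp ps"
      using False ps a composite_append[of ps "[idm a]"] composite_dm_cd[of ps]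
      by (simp add: cp_idm_right)
    then show ?thesis
      using False replaced ps ps_qs composite_replace[of "ps @ [idm a]" ps "[]" qs]
      by (cases "qs = []") auto
  qed
  with replaced ps_qs show ?thesis by simp
qed

lemma take_drop_split:
  "take (length xs) (drop n ys) = xs \<Longrightarrow> ys = take n ys @ xs @ drop (n + length xs) ys"
  by (metis append.assoc append_take_drop_id add.commute drop_drop)

text \<open>A proof step \<open>word_rewrite[OF eq, where n = k]\<close> replaces the subword starting at
  position \<open>k\<close> (the head being position 0) by the other side of \<open>eq\<close>; \<open>word_cancel\<close> deletes
  a subword composing to an identity and \<open>word_insert\<close> inserts one.\<close>

lemma word_rewrite:
  assumes "cmp fs = cmp gs" "fs \<noteq> []" "gs \<noteq> []" "composable C gs" "composable C ws"
    "take (length fs) (drop n ws) = fs" "cmp (take n ws @ gs @ drop (n + length fs) ws) = R"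
  shows "cmp ws = R"
  using composite_replace[OF assms(1-4), of "take n ws" "drop (n + length fs) ws"]
    take_drop_split[OF assms(6)] assms(5,7) by simp

lemma word_cancel:
  assumes "cmp fs = idm a" "fs \<noteq> []" "composable C ws"
    "take (length fs) (drop n ws) = fs" "take n ws @ drop (n + length fs) ws \<noteq> []"
    "cmp (take n ws @ drop (n + length fs) ws) = R"
  shows "cmp ws = R"
  using composite_drop_id[OF assms(1,2), of "take n ws" "drop (n + length fs) ws"]
    take_drop_split[OF assms(4)] assms(3,5,6) by simp

lemma word_insert:
  assumes "cmp fs = idm a" "fs \<noteq> []" "composable C (take n ws @ fs @ drop n ws)" "ws \<noteq> []"
    "cmp (take n ws @ fs @ drop n ws) = R"
  shows "cmp ws = R"
  using composite_drop_id[OF assms(1,2) _ assms(3)] assms(4,5) by simp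

end

section \<open>Tensor powers and whiskering\<close>

primrec tensor_pow :: "('o, 'm) smc \<Rightarrow> 'o \<Rightarrow> nat \<Rightarrow> 'o" where
  "tensor_pow C H 0 = sm_unit C"
| "tensor_pow C H (Suc n) = sm_otens C H (tensor_pow C H n)"

definition whisker :: "('o, 'm) smc \<Rightarrow> 'o \<Rightarrow> nat \<Rightarrow> 'm \<Rightarrow> nat \<Rightarrow> 'm" where
  "whisker C H i f j =
     sm_tens C (sm_id C (tensor_pow C H i)) (sm_tens C f (sm_id C (tensor_pow C H j)))"

locale tensor_powers = strict_smc C for C :: "('o, 'm) smc" +
  fixes H :: 'o
begin

abbreviation "P \<equiv> tensor_pow C H"
abbreviation "W \<equiv> whisker C H"

text \<open>Positions are kept as numerals \<open>1, 2, \<dots>\<close> instead of \<open>Suc 0, \<dots>\<close>, so that the positional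
  side conditions of word rewriting are decided by the simplifier.\<close>

lemma Suc_0_eq_1: "Suc 0 = 1" by simp

lemma take_1_Cons [simp]: "take 1 (x # xs) = [x]"
  and drop_1_Cons [simp]: "drop 1 (x # xs) = xs"
  by simp_all

declare One_nat_def [simp del] Suc_0_eq_1 [simp]

lemma P_1: "P 1 = H" and P_2: "P 2 = ot H H"
  by (simp_all add: numeral_2_eq_2 flip: Suc_0_eq_1)

lemma P_add [simp]: "ot (P a) (P b) = P (a + b)"
  by (induction a) simp_all

lemma dm_W [simp]: "dm (W i f j) = ot (P i) (ot (dm f) (P j))"
  and cd_W [simp]: "cd (W i f j) = ot (P i) (ot (cd f) (P j))"
  by (simp_all add: whisker_def)

lemma W_0_0 [simp]: "W 0 f 0 = f"
  by (simp add: whisker_def)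

lemma idm_P_add: "idm (P (a + b)) = tn (idm (P a)) (idm (P b))"
  by (simp add: tn_idm)

lemma W_W [simp]: "W i (W i' f j') j = W (i + i') f (j' + j)"
  unfolding whisker_def idm_P_add[of i i'] idm_P_add[of j' j] by simp

lemma W_idm [simp]: "W i (idm (P n)) j = idm (P (i + (n + j)))"
  by (simp add: whisker_def tn_idm)

lemma W_cp: "cd f = dm g \<Longrightarrow> W i (cp g f) j = cp (W i g j) (W i f j)"
  unfolding whisker_def by (simp add: interchange[symmetric] cp_idm_idm)

lemma W_interchange_0:
  assumes "dm f = P a" "cd f = P b" "dm g = P a'" "cd g = P b'"
  shows "cp (W (b + k) g 0) (W 0 f (k + a')) = cp (W 0 f (k + b')) (W (a + k) g 0)"
proof -
  have "cp (W (b + k) g 0) (W 0 f (k + a')) = tn f (tn (idm (P k)) g)"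
    unfolding whisker_def idm_P_add
    by (simp add: interchange[symmetric] assms cp_idm_left cp_idm_right cp_idm_idm)
  moreover have "cp (W 0 f (k + b')) (W (a + k) g 0) = tn f (tn (idm (P k)) g)"
    unfolding whisker_def idm_P_add
    by (simp add: interchange[symmetric] assms cp_idm_left cp_idm_right cp_idm_idm)
  ultimately show ?thesis by simp
qed

lemma W_interchange:
  assumes "dm f = P a" "cd f = P b" "dm g = P a'" "cd g = P b'"
  shows "cmp [W (i + b + k) g j, W i f (k + a' + j)] = cmp [W i f (k + b' + j), W (i + a + k) g j]"
proof -
  have "cp (W i (W (b + k) g 0) j) (W i (W 0 f (k + a')) j)
      = W i (cp (W (b + k) g 0) (W 0 f (k + a'))) j"
    by (rule W_cp[symmetric]) (simp add: assms add.assoc)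
  also have "\<dots> = W i (cp (W 0 f (k + b')) (W (a + k) g 0)) j"
    using W_interchange_0[OF assms] by simp
  also have "\<dots> = cp (W i (W 0 f (k + b')) j) (W i (W (a + k) g 0) j)"
    by (rule W_cp) (simp add: assms add.assoc)
  finally show ?thesis by (simp add: composite.simps(3) add.assoc)
qed

lemma W_interchange':
  assumes "dm f = P a" "cd f = P b" "dm g = P a'" "cd g = P b'"
  shows "cmp [W i f (k + b' + j), W (i + a + k) g j] = cmp [W (i + b + k) g j, W i f (k + a' + j)]"
  using W_interchange[OF assms] by simp

lemma composite_map_whisker:
  "composable C fs \<Longrightarrow> fs \<noteq> [] \<Longrightarrow>
     cmp (map (\<lambda>f. W i f j) fs) = W i (cmp fs) j \<and> composable C (map (\<lambda>f. W i f j) fs)"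
proof (induction fs)
  case (Cons f fs)
  show ?case
  proof (cases fs)
    case (Cons g gs)
    with Cons.prems Cons.IH have "cd (cmp fs) = dm f" "cd g = dm f"
      and IH: "cmp (map (\<lambda>f. W i f j) fs) = W i (cmp fs) j" "composable C (map (\<lambda>f. W i f j) fs)"
      using composite_dm_cd[of fs] by auto
    with Cons show ?thesis by (simp add: composite.simps(3) W_cp)
  qed simp
qed simp

lemma whisker_eq:
  assumes "cmp fs = cmp gs" "composable C fs" "composable C gs" "fs \<noteq> []" "gs \<noteq> []"
  shows "cmp (map (\<lambda>f. W i f j) fs) = cmp (map (\<lambda>f. W i f j) gs)"
  using composite_map_whisker[of fs i j] composite_map_whisker[of gs i j] assms by simp

lemma whisker_eq_idm:
  assumes "cmp fs = idm (P n)" "composable C fs" "fs \<noteq> []"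
  shows "cmp (map (\<lambda>f. W i f j) fs) = idm (P (i + (n + j)))"
  using composite_map_whisker[of fs i j] assms by simp

lemma whisker_composite:
  "composable C fs \<Longrightarrow> fs \<noteq> [] \<Longrightarrow> cmp [W i (cmp fs) j] = cmp (map (\<lambda>f. W i f j) fs)"
  using composite_map_whisker by simp
end

section \<open>The opposite category\<close>

definition opposite_smc :: "('o, 'm) smc \<Rightarrow> ('o, 'm) smc" where
  "opposite_smc C = \<lparr>sm_dom = sm_cod C, sm_cod = sm_dom C, sm_comp = (\<lambda>g f. sm_comp C f g),
     sm_id = sm_id C, sm_otens = sm_otens C, sm_tens = sm_tens C, sm_unit = sm_unit C,
     sm_sym = (\<lambda>a b. sm_sym C b a)\<rparr>"

lemma tensor_pow_opposite [simp]: "tensor_pow (opposite_smc C) H n = tensor_pow C H n"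
  by (induction n) (simp_all add: opposite_smc_def)

lemma whisker_opposite [simp]: "whisker (opposite_smc C) H = whisker C H"
  unfolding whisker_def tensor_pow_opposite by (simp add: opposite_smc_def)

context strict_smc
begin

lemma strict_smc_opposite: "strict_symmetric_monoidal_category (opposite_smc C)"
  unfolding strict_symmetric_monoidal_category_def opposite_smc_def
  by (simp add: cp_assoc cp_idm_left cp_idm_right tn_idm interchange hexagon' dm_sy cd_sy
      sy_inverse sy_natural)

end

section \<open>Convolution\<close>

locale monoid_comonoid = tensor_powers C H for C :: "('o, 'm) smc" and H :: 'o +
  fixes m u D e :: 'm
  assumes monoid_comonoid_types: "dm m = ot H H" "cd m = H" "dm u = un" "cd u = H"
      "dm D = H" "cd D = ot H H" "dm e = H" "cd e = un"
    and monoid_comonoid_laws: "cp m (tn m (idm H)) = cp m (tn (idm H) m)"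
      "cp m (tn u (idm H)) = idm H" "cp m (tn (idm H) u) = idm H"
      "cp (tn D (idm H)) D = cp (tn (idm H) D) D"
      "cp (tn e (idm H)) D = idm H" "cp (tn (idm H) e) D = idm H"
begin

abbreviation "X \<equiv> sy H H"

lemma structure_types [simp]: "dm m = P 2" "cd m = P 1" "dm u = P 0" "cd u = P 1"
  "dm D = P 1" "cd D = P 2" "dm e = P 1" "cd e = P 0" "dm X = P 2" "cd X = P 2"
  using monoid_comonoid_types by (simp_all add: P_1 P_2 dm_sy cd_sy)

lemma W_0_1: "W 0 f 1 = tn f (idm H)" and W_1_0: "W 1 f 0 = tn (idm H) f"
  and W_1_1: "W 1 f 1 = tn (idm H) (tn f (idm H))"
  by (simp_all add: whisker_def P_1)

lemma W_0_2: "W 0 f 2 = tn f (tn (idm H) (idm H))"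
  by (simp add: whisker_def P_2 tn_idm)

lemmas word_simps = W_0_1 W_1_0 W_1_1 P_1 P_2 composite.simps(3) dm_sy cd_sy

lemma mult_assoc: "cmp [m, W 0 m 1] = cmp [m, W 1 m 0]"
  and mult_unit_left: "cmp [m, W 0 u 1] = idm (P 1)"
  and mult_unit_right: "cmp [m, W 1 u 0] = idm (P 1)"
  and comult_coassoc: "cmp [W 0 D 1, D] = cmp [W 1 D 0, D]"
  and counit_left: "cmp [W 0 e 1, D] = idm (P 1)"
  and counit_right: "cmp [W 1 e 0, D] = idm (P 1)"
  using monoid_comonoid_laws by (simp_all add: word_simps)

lemma sy_unit_right: "cmp [X, W 1 u 0] = cmp [W 0 u 1]"
  using sy_natural[of "idm H" u] by (simp add: word_simps sy_unit cp_idm_right)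

lemma sy_unit_left: "cmp [X, W 0 u 1] = cmp [W 1 u 0]"
  using sy_natural[of u "idm H"] by (simp add: word_simps sy_unit cp_idm_right)

lemma sy_mult_right: "cmp [X, W 1 m 0] = cmp [W 0 m 1, W 1 X 0, W 0 X 1]"
  using sy_natural[of "idm H" m] by (simp add: word_simps hexagon)

lemma sy_mult_left: "cmp [X, W 0 m 1] = cmp [W 1 m 0, W 0 X 1, W 1 X 0]"
  using sy_natural[of m "idm H"] by (simp add: word_simps hexagon')

lemma sy_comult_left: "cmp [W 0 X 1, W 1 X 0, W 0 D 1] = cmp [W 1 D 0, X]"
  using sy_natural[of D "idm H"] by (simp add: word_simps hexagon' cp_assoc)

lemma mult_tensor_assoc:
  "cmp [W 0 m 1, W 2 m 0, W 1 X 1, W 0 m 3, W 2 m 2, W 1 X 3]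
     = cmp [W 0 m 1, W 2 m 0, W 1 X 1, W 2 m 1, W 4 m 0, W 3 X 1]"
proof -
  have "cmp [W 0 m 1, W 2 m 0, W 1 X 1, W 0 m 3, W 2 m 2, W 1 X 3]
      = cmp [W 0 m 1, W 2 m 0, W 2 m 1, W 1 m 3, W 2 X 2, W 3 X 1, W 1 X 3]"
    apply (rule word_rewrite[OF W_interchange[of m 2 1 X 2 2 0 0 1], where n=2], simp_all)
    apply (rule word_rewrite[OF whisker_eq[OF sy_mult_left, where i=2 and j=1], where n=3], simp_all)
    apply (rule word_rewrite[OF W_interchange[of m 2 1 m 2 1 0 1 0], where n=1], simp_all)
    apply (rule word_rewrite[OF whisker_eq[OF mult_assoc, where i=0 and j=1], where n=0], simp_all)
    apply (rule word_rewrite[OF W_interchange'[of m 2 1 m 2 1 1 0 0], where n=1], simp_all)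
    apply (rule word_rewrite[OF W_interchange'[of m 2 1 m 2 1 1 0 1], where n=2], simp_all)
    done
  moreover have "cmp [W 0 m 1, W 2 m 0, W 1 X 1, W 2 m 1, W 4 m 0, W 3 X 1]
      = cmp [W 0 m 1, W 2 m 0, W 2 m 1, W 1 m 3, W 2 X 2, W 3 X 1, W 1 X 3]"
    apply (rule word_rewrite[OF whisker_eq[OF sy_mult_right, where i=1 and j=1], where n=2], simp_all)
    apply (rule word_rewrite[OF W_interchange'[of X 2 2 m 2 1 1 1 0], where n=4], simp_all)
    apply (rule word_rewrite[OF W_interchange'[of X 2 2 m 2 1 2 0 0], where n=3], simp_all)
    apply (rule word_rewrite[OF W_interchange'[of m 2 1 m 2 1 1 1 0], where n=2], simp_all)
    apply (rule word_rewrite[OF whisker_eq[OF mult_assoc[symmetric], where i=2 and j=0], where n=1], simp_all)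
    apply (rule word_rewrite[OF W_interchange'[of X 2 2 X 2 2 1 0 1], where n=5], simp_all)
    done
  ultimately show ?thesis by simp
qed

text \<open>Convolution of maps \<open>H \<rightarrow> H \<otimes> H\<close>, the target being an algebra with product
  \<open>(\<mu> \<otimes> \<mu>) \<circ> (id \<otimes> \<sigma> \<otimes> id)\<close>.\<close>

definition conv (infixl "\<star>" 70) where
  "p \<star> q = cmp [W 0 m 1, W 2 m 0, W 1 X 1, W 0 p 2, W 1 q 0, D]"

definition "conv_unit = cmp [W 0 u 1, u, e]"

context
  fixes p :: 'm
  assumes p_types [simp]: "dm p = P 1" "cd p = P 2"
begin

lemma conv_unit_right: "p \<star> conv_unit = p"
  unfolding conv_def conv_unit_def
  apply (rule word_rewrite[OF whisker_composite[of "[W 0 u 1, u, e]" 1 0], where n=4], simp_all)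
  apply (rule word_cancel[OF counit_right, where n=6], simp_all)
  apply (rule word_rewrite[OF W_interchange'[of p 1 2 u 0 1 0 0 1], where n=3], simp_all)
  apply (rule word_rewrite[OF W_interchange'[of p 1 2 u 0 1 0 0 0], where n=4], simp_all)
  apply (rule word_rewrite[OF whisker_eq[OF sy_unit_right, where i=1 and j=1], where n=2], simp_all)
  apply (rule word_rewrite[OF W_interchange[of u 0 1 m 2 1 1 0 0], where n=1], simp_all)
  apply (rule word_cancel[OF whisker_eq_idm[OF mult_unit_right, where i=0 and j=1], where n=0], simp_all)
  apply (rule word_cancel[OF whisker_eq_idm[OF mult_unit_right, where i=1 and j=0], where n=0], simp_all)
  done

lemma conv_unit_left: "conv_unit \<star> p = p"
  unfolding conv_def conv_unit_def
  apply (rule word_rewrite[OF whisker_composite[of "[W 0 u 1, u, e]" 0 2], where n=3], simp_all)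
  apply (rule word_rewrite[OF W_interchange'[of e 1 0 p 1 2 0 0 0], where n=5], simp_all)
  apply (rule word_cancel[OF counit_left, where n=6], simp_all)
  apply (rule word_rewrite[OF W_interchange[of u 0 1 X 2 2 0 0 1], where n=2], simp_all)
  apply (rule word_rewrite[OF whisker_eq[OF sy_unit_left, where i=0 and j=1], where n=3], simp_all)
  apply (rule word_rewrite[OF W_interchange[of u 0 1 m 2 1 0 1 0], where n=1], simp_all)
  apply (rule word_cancel[OF whisker_eq_idm[OF mult_unit_left, where i=0 and j=1], where n=0], simp_all)
  apply (rule word_cancel[OF whisker_eq_idm[OF mult_unit_left, where i=1 and j=0], where n=0], simp_all)
  done

end

context
  fixes p q r :: 'm
  assumes pqr_types [simp]:
    "dm p = P 1" "cd p = P 2" "dm q = P 1" "cd q = P 2" "dm r = P 1" "cd r = P 2"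
begin

lemma conv_assoc: "(p \<star> q) \<star> r = p \<star> (q \<star> r)"
proof -
  have "(p \<star> q) \<star> r = cmp [W 0 m 1, W 2 m 0, W 1 X 1, W 2 m 1, W 4 m 0, W 3 X 1,
      W 0 p 4, W 1 q 2, W 2 r 0, W 1 D 0, D]"
    unfolding conv_def
    apply (rule word_rewrite[OF whisker_composite[of "[W 0 m 1, W 2 m 0, W 1 X 1, W 0 p 2, W 1 q 0, D]" 0 2], where n=3], simp_all)
    apply (rule word_rewrite[OF W_interchange'[of D 1 2 r 1 2 0 0 0], where n=8], simp_all)
    apply (rule word_rewrite[OF mult_tensor_assoc, where n=0], simp_all)
    apply (rule word_rewrite[OF comult_coassoc, where n=9], simp_all)
    done
  moreover have "p \<star> (q \<star> r) = cmp [W 0 m 1, W 2 m 0, W 1 X 1, W 2 m 1, W 4 m 0, W 3 X 1,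
      W 0 p 4, W 1 q 2, W 2 r 0, W 1 D 0, D]"
    unfolding conv_def
    apply (rule word_rewrite[OF whisker_composite[of "[W 0 m 1, W 2 m 0, W 1 X 1, W 0 q 2, W 1 r 0, D]" 1 0], where n=4], simp_all)
    apply (rule word_rewrite[OF W_interchange'[of p 1 2 m 2 1 0 0 1], where n=3], simp_all)
    apply (rule word_rewrite[OF W_interchange'[of p 1 2 m 2 1 0 2 0], where n=4], simp_all)
    apply (rule word_rewrite[OF W_interchange'[of p 1 2 X 2 2 0 1 1], where n=5], simp_all)
    done
  ultimately show ?thesis by simp
qed

lemma conv_inverse_unique:
  assumes "p \<star> q = conv_unit" "q \<star> r = conv_unit"
  shows "p = r"
proof -
  have "p = p \<star> (q \<star> r)"
    using assms(2) conv_unit_right[of p] by simp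
  also have "\<dots> = (p \<star> q) \<star> r"
    by (rule conv_assoc[symmetric])
  also have "\<dots> = r"
    using assms(1) conv_unit_left[of r] by simp
  finally show ?thesis .
qed

end

lemma mult_left_eq_idm_iff:
  assumes g_types [simp]: "dm g = P 0" "cd g = P 1"
  shows "cmp [m, W 0 g 1] = idm (P 1) \<longleftrightarrow> g = u"
proof
  have "cmp [m, W 0 g 1, u] = g"
    apply (rule word_rewrite[OF W_interchange'[of g 0 1 u 0 1 0 0 0], where n=1], simp_all)
    apply (rule word_cancel[OF mult_unit_right, where n=0], simp_all)
    done
  moreover assume "cmp [m, W 0 g 1] = idm (P 1)"
  ultimately show "g = u"
    using composite_append[of "[m, W 0 g 1]" "[u]"] by (simp add: cp_idm_left)
qed (simp add: mult_unit_left)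

end

section \<open>The antipode reverses products and coproducts\<close>

locale hopf = tensor_powers C H for C :: "('o, 'm) smc" and H :: 'o +
  fixes m u D e S :: 'm
  assumes hopf: "hopf_algebra C H m u D e S"
begin

lemmas hopf_laws = hopf[unfolded hopf_algebra_def Let_def]

sublocale monoid_comonoid C H m u D e
  using hopf_laws by unfold_locales simp_all

lemma antipode_types [simp]: "dm S = P 1" "cd S = P 1"
  using hopf_laws by (simp_all add: P_1)

lemma counit_unit: "cmp [e, u] = idm (P 0)"
  and antipode_left: "cmp [m, W 0 S 1, D] = cmp [u, e]"
  and antipode_right: "cmp [m, W 1 S 0, D] = cmp [u, e]"
  using hopf_laws by (simp_all add: word_simps)

lemma comult_unit: "cmp [D, u] = cmp [W 0 u 1, u]"
proof -
  have "tn u u = tn (cp u (idm un)) (cp (idm H) u)"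
    by (simp add: cp_idm_left cp_idm_right P_1)
  also have "\<dots> = cp (tn u (idm H)) (tn (idm un) u)"
    by (rule interchange) (simp_all add: P_1)
  finally show ?thesis using hopf_laws by (simp add: word_simps)
qed

lemma bialgebra: "cmp [D, m] = cmp [W 0 m 1, W 2 m 0, W 1 X 1, W 0 D 2, W 1 D 0]"
proof -
  have "tn m m = cp (W 0 m 1) (W 2 m 0)" "tn D D = cp (W 0 D 2) (W 1 D 0)"
    by (simp_all add: whisker_def interchange[symmetric] cp_idm_left cp_idm_right)
  then show ?thesis using hopf_laws by (simp add: word_simps cp_assoc)
qed

lemma comult_conv_comult_antipode: "D \<star> cmp [D, S] = conv_unit"
  unfolding conv_def conv_unit_def
  apply (rule word_rewrite[OF whisker_composite[of "[D, S]" 1 0], where n=4], simp_all)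
  apply (rule word_rewrite[OF bialgebra[symmetric], where n=0], simp_all)
  apply (rule word_rewrite[OF antipode_right, where n=1], simp_all)
  apply (rule word_rewrite[OF comult_unit, where n=0], simp_all)
  done

text \<open>\<open>(S(h\<^sub>2) \<otimes> S(h\<^sub>1)) (h\<^sub>3 \<otimes> h\<^sub>4) = S(h\<^sub>2) h\<^sub>3 \<otimes> S(h\<^sub>1) h\<^sub>4 = 1 \<otimes> S(h\<^sub>1) h\<^sub>2 = \<epsilon>(h) 1 \<otimes> 1\<close>\<close>

lemma flip_antipode_conv_comult: "cmp [X, W 0 S 1, W 1 S 0, D] \<star> D = conv_unit"
  unfolding conv_def conv_unit_def
  apply (rule word_rewrite[OF whisker_composite[of "[X, W 0 S 1, W 1 S 0, D]" 0 2], where n=3], simp_all)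
  apply (rule word_rewrite[OF comult_coassoc[symmetric], where n=7], simp_all)
  apply (rule word_rewrite[OF whisker_eq[OF comult_coassoc, where i=0 and j=1], where n=6], simp_all)
  apply (rule word_rewrite[OF W_interchange'[of m 2 1 m 2 1 0 0 0], where n=0], simp_all)
  apply (rule word_rewrite[OF whisker_eq[OF sy_mult_right[symmetric], where i=0 and j=1], where n=1], simp_all)
  apply (rule word_rewrite[OF W_interchange[of S 1 1 m 2 1 0 0 1], where n=2], simp_all)
  apply (rule word_rewrite[OF whisker_eq[OF antipode_left, where i=1 and j=1], where n=3], simp_all)
  apply (rule word_cancel[OF whisker_eq_idm[OF counit_right, where i=0 and j=1], where n=4], simp_all)
  apply (rule word_rewrite[OF W_interchange'[of S 1 1 u 0 1 0 0 1], where n=2], simp_all)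
  apply (rule word_rewrite[OF whisker_eq[OF sy_unit_right, where i=0 and j=1], where n=1], simp_all)
  apply (rule word_rewrite[OF W_interchange[of u 0 1 m 2 1 0 0 0], where n=0], simp_all)
  apply (rule word_rewrite[OF antipode_left, where n=1], simp_all)
  done

lemma comult_antipode: "cmp [D, S] = cmp [X, W 0 S 1, W 1 S 0, D]"
  by (rule conv_inverse_unique[OF _ _ _ _ _ _ flip_antipode_conv_comult
        comult_conv_comult_antipode, symmetric]) simp_all

lemma hopf_algebra_opposite: "hopf_algebra (opposite_smc C) H D e m u S"
proof -
  have "cp (cp m (tn S (idm H))) D = cp u e"
    using hopf_laws cp_assoc[of D "tn S (idm H)" m] by (simp del: structure_types)
  moreover have "cp (cp m (tn (idm H) S)) D = cp u e"
    using hopf_laws cp_assoc[of D "tn (idm H) S" m] by (simp del: structure_types)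
  ultimately show ?thesis
    using hopf_laws
    unfolding hopf_algebra_def Let_def
    by (simp add: opposite_smc_def cp_assoc dm_sy cd_sy del: structure_types)
qed

lemma antipode_mult: "cmp [S, m] = cmp [m, W 1 S 0, W 0 S 1, X]"
proof -
  interpret opposite: hopf "opposite_smc C" H D e m u S
    by unfold_locales (rule strict_smc_opposite, rule hopf_algebra_opposite)
  have "cp S m = cp (cp (cp m (W 1 S 0)) (W 0 S 1)) X"
    using opposite.comult_antipode unfolding whisker_opposite
    by (simp add: composite.simps(3) opposite_smc_def)
  then show ?thesis by (simp add: composite.simps(3) cp_assoc)
qed

end

section \<open>Integrals and the zigzag identities\<close>

locale integral_hopf = hopf C H m u D e S
  for C :: "('o, 'm) smc" and H :: 'o and m u D e S :: 'm +
  fixes Lam lam :: 'm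
  assumes integral_hopf: "integral_hopf_algebra C H m u D e S Lam lam"
begin

lemmas integral_laws =
  integral_hopf[unfolded integral_hopf_algebra_def left_cointegral_def right_integral_def]

lemma integral_types [simp]: "dm Lam = P 0" "cd Lam = P 1" "dm lam = P 1" "cd lam = P 0"
  using integral_laws by (simp_all add: P_1)

lemma cointegral: "cmp [m, W 0 Lam 1] = cmp [Lam, e]"
  and integral: "cmp [W 1 lam 0, D] = cmp [u, lam]"
  and integral_normalized: "cmp [lam, Lam] = idm (P 0)"
  using integral_laws by (simp_all add: word_simps)

lemma sy_cointegral: "cmp [X, W 0 Lam 1] = cmp [W 1 Lam 0]"
  using sy_natural[of Lam "idm H"] by (simp add: word_simps sy_unit cp_idm_right)

lemma sy_integral: "cmp [W 1 lam 0, X] = cmp [W 0 lam 1]"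
  using sy_natural[of lam "idm H"] by (simp add: word_simps sy_unit cp_idm_left)

text \<open>\<open>S(\<Lambda>\<^sub>1) \<lambda>(\<Lambda>\<^sub>2 h) = S(\<Lambda>\<^sub>1) \<Lambda>\<^sub>2 h\<^sub>1 \<lambda>(\<Lambda>\<^sub>3 h\<^sub>2) = h\<^sub>1 \<lambda>(\<Lambda> h\<^sub>2) = h\<close>: the integral
  property, the antipode axiom, then the cointegral property and normalization.\<close>

lemma first_zigzag: "cmp [W 1 lam 0, W 1 m 0, W 0 S 2, W 0 D 1, W 0 Lam 1] = idm (P 1)"
  apply (rule word_insert[OF whisker_eq_idm[OF mult_unit_right, where i=0 and j=0], where n=0], simp_all)
  apply (rule word_rewrite[OF whisker_eq[OF integral[symmetric], where i=1 and j=0], where n=1], simp_all)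
  apply (rule word_rewrite[OF whisker_eq[OF bialgebra, where i=1 and j=0], where n=2], simp_all)
  apply (rule word_rewrite[OF W_interchange'[of D 1 2 D 1 2 1 0 0], where n=5], simp_all)
  apply (rule word_rewrite[OF W_interchange[of S 1 1 D 1 2 0 0 1], where n=6], simp_all)
  apply (rule word_rewrite[OF whisker_eq[OF comult_coassoc[symmetric], where i=0 and j=1], where n=7], simp_all)
  apply (rule word_rewrite[OF W_interchange[of m 2 1 lam 1 0 1 0 0], where n=1], simp_all)
  apply (rule word_rewrite[OF whisker_eq[OF mult_assoc[symmetric], where i=0 and j=0], where n=0], simp_all)
  apply (rule word_rewrite[OF W_interchange'[of m 2 1 lam 1 0 0 1 0], where n=1], simp_all)
  apply (rule word_rewrite[OF W_interchange'[of m 2 1 m 2 1 0 1 0], where n=2], simp_all)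
  apply (rule word_rewrite[OF W_interchange'[of m 2 1 X 2 2 0 0 1], where n=3], simp_all)
  apply (rule word_rewrite[OF W_interchange'[of m 2 1 D 1 2 0 1 0], where n=4], simp_all)
  apply (rule word_rewrite[OF whisker_eq[OF antipode_left, where i=0 and j=2], where n=5], simp_all)
  apply (rule word_cancel[OF whisker_eq_idm[OF counit_left, where i=0 and j=1], where n=6], simp_all)
  apply (rule word_rewrite[OF W_interchange[of u 0 1 D 1 2 0 1 0], where n=4], simp_all)
  apply (rule word_rewrite[OF W_interchange[of u 0 1 X 2 2 0 0 1], where n=3], simp_all)
  apply (rule word_rewrite[OF W_interchange[of u 0 1 m 2 1 0 1 0], where n=2], simp_all)
  apply (rule word_rewrite[OF W_interchange[of u 0 1 lam 1 0 0 1 0], where n=1], simp_all)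
  apply (rule word_cancel[OF whisker_eq_idm[OF mult_unit_left, where i=0 and j=0], where n=0], simp_all)
  apply (rule word_rewrite[OF W_interchange[of Lam 0 1 D 1 2 0 0 0], where n=3], simp_all)
  apply (rule word_rewrite[OF whisker_eq[OF sy_cointegral, where i=0 and j=1], where n=2], simp_all)
  apply (rule word_rewrite[OF whisker_eq[OF cointegral, where i=1 and j=0], where n=1], simp_all)
  apply (rule word_cancel[OF whisker_eq_idm[OF integral_normalized, where i=1 and j=0], where n=0], simp_all)
  using counit_right by simp

lemma integral_antipode: "cmp [W 1 lam 0, X, W 0 S 1, W 1 S 0, D] = cmp [u, lam, S]"
  apply (rule word_rewrite[OF whisker_eq[OF comult_antipode[symmetric], where i=0 and j=0], where n=1], simp_all)
  apply (rule word_rewrite[OF whisker_eq[OF integral, where i=0 and j=0], where n=0], simp_all)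
  done

definition "zigzag_factor = cmp [W 0 lam 1, W 0 S 1, D, Lam]"

lemma zigzag_factor_types [simp]: "dm zigzag_factor = P 0" "cd zigzag_factor = P 1"
  by (simp_all add: zigzag_factor_def)

text \<open>\<open>\<lambda>(h S(\<Lambda>\<^sub>1)) \<Lambda>\<^sub>2 = \<lambda>(h\<^sub>1 S(\<Lambda>\<^sub>1 h\<^sub>2)) \<Lambda>\<^sub>2 h\<^sub>3 = \<lambda>(h\<^sub>1 S(h\<^sub>2) S(\<Lambda>\<^sub>1)) \<Lambda>\<^sub>2 h\<^sub>3 = \<lambda>(S(\<Lambda>\<^sub>1)) \<Lambda>\<^sub>2 h\<close>:
  the cointegral property, \<open>antipode_mult\<close>, then the antipode axiom.\<close>

lemma second_zigzag_eq_mult: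
  "cmp [W 0 lam 1, W 0 m 1, W 1 S 1, W 1 D 0, W 1 Lam 0] = cmp [m, W 0 zigzag_factor 1]"
  unfolding zigzag_factor_def
  apply (rule sym, rule word_rewrite[OF whisker_composite[of "[W 0 lam 1, W 0 S 1, D, Lam]" 0 1], where n=1], simp_all)
  apply (rule sym)
  apply (rule word_insert[OF whisker_eq_idm[OF counit_right, where i=0 and j=0], where n=5], simp_all)
  apply (rule word_rewrite[OF whisker_eq[OF cointegral[symmetric], where i=1 and j=0], where n=4], simp_all)
  apply (rule word_rewrite[OF whisker_eq[OF bialgebra, where i=1 and j=0], where n=3], simp_all)
  apply (rule word_rewrite[OF whisker_eq[OF antipode_mult, where i=1 and j=1], where n=2], simp_all)
  apply (rule word_rewrite[OF whisker_eq[OF mult_assoc[symmetric], where i=0 and j=1], where n=1], simp_all)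
  apply (rule word_rewrite[OF W_interchange[of S 1 1 S 1 1 1 0 1], where n=3], simp_all)
  apply (rule word_rewrite[OF W_interchange[of Lam 0 1 D 1 2 1 0 0], where n=9], simp_all)
  apply (rule word_rewrite[OF whisker_eq[OF comult_coassoc[symmetric], where i=0 and j=0], where n=10], simp_all)
  apply (rule word_rewrite[OF W_interchange'[of X 2 2 m 2 1 1 0 0], where n=5], simp_all)
  apply (rule word_rewrite[OF whisker_eq[OF sy_comult_left, where i=1 and j=1], where n=6], simp_all)
  apply (rule word_rewrite[OF whisker_eq[OF sy_cointegral, where i=1 and j=1], where n=7], simp_all)
  apply (rule word_rewrite[OF W_interchange[of D 1 2 Lam 0 1 0 0 1], where n=7], simp_all)
  apply (rule word_rewrite[OF W_interchange[of D 1 2 D 1 2 0 0 1], where n=6], simp_all)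
  apply (rule word_rewrite[OF W_interchange[of D 1 2 m 2 1 0 1 0], where n=5], simp_all)
  apply (rule word_rewrite[OF W_interchange[of D 1 2 S 1 1 0 0 1], where n=4], simp_all)
  apply (rule word_rewrite[OF whisker_eq[OF antipode_right, where i=0 and j=2], where n=2], simp_all)
  apply (rule word_cancel[OF whisker_eq_idm[OF mult_unit_left, where i=0 and j=1], where n=1], simp_all)
  apply (rule word_rewrite[OF W_interchange'[of e 1 0 S 1 1 0 0 1], where n=1], simp_all)
  apply (rule word_rewrite[OF W_interchange'[of e 1 0 m 2 1 0 1 0], where n=2], simp_all)
  apply (rule word_rewrite[OF W_interchange'[of e 1 0 D 1 2 0 0 1], where n=3], simp_all)
  apply (rule word_rewrite[OF W_interchange'[of e 1 0 Lam 0 1 0 0 1], where n=4], simp_all)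
  apply (rule word_cancel[OF whisker_eq_idm[OF counit_left, where i=0 and j=0], where n=5], simp_all)
  apply (rule word_rewrite[OF W_interchange'[of S 1 1 m 2 1 0 0 0], where n=1], simp_all)
  apply (rule word_rewrite[OF W_interchange'[of lam 1 0 m 2 1 0 0 0], where n=0], simp_all)
  done

text \<open>\<open>\<lambda>(S(\<Lambda>\<^sub>1)) \<Lambda>\<^sub>2 = S(\<Lambda>\<^sub>2) \<lambda>(S(\<Lambda>\<^sub>1)) \<Lambda>\<^sub>3 = \<lambda>(S(\<Lambda>\<^sub>1)) \<epsilon>(\<Lambda>\<^sub>2) 1\<close> by
  \<open>integral_antipode\<close>, which says \<open>S(x\<^sub>2) \<lambda>(S(x\<^sub>1)) = \<lambda>(S(x)) 1\<close>.\<close>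

lemma zigzag_factor_eq: "zigzag_factor = cmp [u, lam, S, Lam]"
  unfolding zigzag_factor_def
  apply (rule word_insert[OF whisker_eq_idm[OF mult_unit_left, where i=0 and j=0], where n=0], simp_all)
  apply (rule word_rewrite[OF whisker_eq[OF integral_antipode[symmetric], where i=0 and j=1], where n=1], simp_all)
  apply (rule word_rewrite[OF whisker_eq[OF comult_coassoc, where i=0 and j=0], where n=5], simp_all)
  apply (rule word_rewrite[OF whisker_eq[OF sy_integral, where i=0 and j=1], where n=1], simp_all)
  apply (rule word_rewrite[OF W_interchange[of lam 1 0 m 2 1 0 0 0], where n=0], simp_all)
  apply (rule word_rewrite[OF W_interchange[of S 1 1 m 2 1 0 0 0], where n=1], simp_all)
  apply (rule word_rewrite[OF whisker_eq[OF antipode_left, where i=1 and j=0], where n=2], simp_all)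
  apply (rule word_cancel[OF whisker_eq_idm[OF counit_right, where i=0 and j=0], where n=3], simp_all)
  apply (rule word_rewrite[OF W_interchange'[of S 1 1 u 0 1 0 0 0], where n=1], simp_all)
  apply (rule word_rewrite[OF W_interchange'[of lam 1 0 u 0 1 0 0 0], where n=0], simp_all)
  done

lemma zigzag_factor_eq_unit_iff: "zigzag_factor = u \<longleftrightarrow> cmp [lam, S, Lam] = idm (P 0)"
proof -
  have "cp e zigzag_factor = cmp [lam, S, Lam]"
    unfolding zigzag_factor_eq
    using composite_append[of "[e]" "[u, lam, S, Lam]"] composite_append[of "[e, u]" "[lam, S, Lam]"]
    by (simp add: counit_unit cp_idm_left)
  moreover have "cp u (cmp [lam, S, Lam]) = zigzag_factor"
    unfolding zigzag_factor_eq using composite_append[of "[u]" "[lam, S, Lam]"] by simp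
  ultimately show ?thesis
    using counit_unit by (auto simp: composite.simps(3) cp_idm_right)
qed

lemma second_zigzag_iff:
  "cmp [W 0 lam 1, W 0 m 1, W 1 S 1, W 1 D 0, W 1 Lam 0] = idm (P 1)
     \<longleftrightarrow> cmp [lam, S, Lam] = idm (P 0)"
  unfolding second_zigzag_eq_mult by (simp add: mult_left_eq_idm_iff zigzag_factor_eq_unit_iff)

lemma zigzag_words:
  "cp (tn (idm H) (cp lam m)) (tn (cp (tn S (idm H)) (cp D Lam)) (idm H))
     = cmp [W 1 lam 0, W 1 m 0, W 0 S 2, W 0 D 1, W 0 Lam 1]"
  "cp (tn (cp lam m) (idm H)) (tn (idm H) (cp (tn S (idm H)) (cp D Lam)))
     = cmp [W 0 lam 1, W 0 m 1, W 1 S 1, W 1 D 0, W 1 Lam 0]"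
proof -
  have "tn (idm H) (cp lam m) = cmp [W 1 lam 0, W 1 m 0]"
    "tn (cp (tn S (idm H)) (cp D Lam)) (idm H) = cmp [W 0 S 2, W 0 D 1, W 0 Lam 1]"
    "tn (cp lam m) (idm H) = cmp [W 0 lam 1, W 0 m 1]"
    "tn (idm H) (cp (tn S (idm H)) (cp D Lam)) = cmp [W 1 S 1, W 1 D 0, W 1 Lam 0]"
    using composite_map_whisker[of "[lam, m]" 1 0] composite_map_whisker[of "[W 0 S 1, D, Lam]" 0 1]
      composite_map_whisker[of "[lam, m]" 0 1] composite_map_whisker[of "[W 0 S 1, D, Lam]" 1 0]
    by (simp_all add: word_simps W_0_2)
  then show "cp (tn (idm H) (cp lam m)) (tn (cp (tn S (idm H)) (cp D Lam)) (idm H))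
      = cmp [W 1 lam 0, W 1 m 0, W 0 S 2, W 0 D 1, W 0 Lam 1]"
    "cp (tn (cp lam m) (idm H)) (tn (idm H) (cp (tn S (idm H)) (cp D Lam)))
      = cmp [W 0 lam 1, W 0 m 1, W 1 S 1, W 1 D 0, W 1 Lam 0]"
    using composite_append[of "[W 1 lam 0, W 1 m 0]" "[W 0 S 2, W 0 D 1, W 0 Lam 1]"]
      composite_append[of "[W 0 lam 1, W 0 m 1]" "[W 1 S 1, W 1 D 0, W 1 Lam 0]"]
    by simp_all
qed

end

theorem mainTheorem2:
  fixes C :: "('o, 'm) smc"
  assumes "strict_symmetric_monoidal_category C"
    and "integral_hopf_algebra C H mu eta De ep s Lam lam"
  shows "(let beta = sm_comp C lam mu;
              gamma = sm_comp C (sm_tens C s (sm_id C H)) (sm_comp C De Lam)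
          in sm_comp C (sm_tens C (sm_id C H) beta) (sm_tens C gamma (sm_id C H)) = sm_id C H \<and>
             sm_comp C (sm_tens C beta (sm_id C H)) (sm_tens C (sm_id C H) gamma) = sm_id C H)
         \<longleftrightarrow> sm_comp C lam (sm_comp C s Lam) = sm_id C (sm_unit C)"
proof -
  interpret integral_hopf C H mu eta De ep s Lam lam
    using assms by unfold_locales (auto simp: integral_hopf_algebra_def)
  show ?thesis
    unfolding Let_def zigzag_words using first_zigzag second_zigzag_iff
    by (simp add: P_1 composite.simps(3))
qed

end
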